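(* Let $H$ be a Heyting algebra and $f,g:H\to H$ monotone polynomials such that $\mu.f=f^m(\bot)$ and $\mu.g=g^n(\bot)$ for some $m,n\ge0$. Then $\mu.(f\wedge g)=(f\wedge g)^{m+n-1}(\bot)$, with the convention $k^{j}(\bot)=\bot$ for $j<0$.
   Context: A function $f:H\to H$ is a polynomial if there exist an IPC formula $\phi$, a variable $x$ and a valuation $v$ in $H$ of the other variables of $\phi$ such that $f(h)=[\![\phi]\!]_{(v,h/x)}$ for all $h$. $f\wedge g$ is the pointwise meet; $\mu$ denotes least fixed point. *)

theory Defs
  imports Main
begin

class heyting_algebra = bounded_lattice +
  fixes himp :: "'a \<Rightarrow> 'a \<Rightarrow> 'a"
  assumes himp_residuation: "inf x y \<le> z \<longleftrightarrow> x \<le> himp y z"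

datatype ipc_form =
    PVar nat
  | PBot
  | PTop
  | PAnd ipc_form ipc_form
  | POr ipc_form ipc_form
  | PImp ipc_form ipc_form

primrec ipc_eval :: "(nat \<Rightarrow> 'a::heyting_algebra) \<Rightarrow> ipc_form \<Rightarrow> 'a" where
  "ipc_eval v (PVar i) = v i"
| "ipc_eval v PBot = bot"
| "ipc_eval v PTop = top"
| "ipc_eval v (PAnd a b) = inf (ipc_eval v a) (ipc_eval v b)"
| "ipc_eval v (POr a b) = sup (ipc_eval v a) (ipc_eval v b)"
| "ipc_eval v (PImp a b) = himp (ipc_eval v a) (ipc_eval v b)"

definition polynomial :: "('a::heyting_algebra \<Rightarrow> 'a) \<Rightarrow> bool" where
  "polynomial f \<longleftrightarrow> (\<exists>\<phi> x v. \<forall>h. f h = ipc_eval (v(x := h)) \<phi>)"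

text \<open>a is the least fixed point of f (H need not be complete).\<close>
definition is_least_fixpoint :: "('a::order \<Rightarrow> 'a) \<Rightarrow> 'a \<Rightarrow> bool" where
  "is_least_fixpoint f a \<longleftrightarrow> f a = a \<and> (\<forall>b. f b = b \<longrightarrow> a \<le> b)"

end

theory Submission
  imports Defs
begin

text \<open>Polynomials are compatible with every congruence of the Heyting algebra; in particular,
  for each d, the congruence \<open>x \<sim> y \<longleftrightarrow> d \<sqinter> x = d \<sqinter> y\<close> gives: if \<open>d \<sqinter> x \<le> y\<close> then
  \<open>d \<sqinter> f x \<le> f y\<close> for a monotone polynomial f. Starting from
  \<open>f\<^sup>0 \<bottom> \<sqinter> g\<^sup>j \<bottom> = \<bottom>\<close>, a double induction on i and j then yields
  \<open>f\<^sup>i \<bottom> \<sqinter> g\<^sup>j \<bottom> \<le> (f \<sqinter> g)\<^sup>i\<^sup>+\<^sup>j\<^sup>-\<^sup>1 \<bottom>\<close>. Finally every Kleene iterate of \<open>f \<sqinter> g\<close> lies below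
  the fixed points \<open>f\<^sup>m \<bottom>\<close> and \<open>g\<^sup>n \<bottom>\<close>, so the iteration of \<open>f \<sqinter> g\<close> is stationary
  from step \<open>m + n - 1\<close> on. For \<open>m = n = 0\<close> the truncated subtraction gives
  \<open>(f \<sqinter> g)\<^sup>0 \<bottom> = \<bottom>\<close>, which is the paper's convention for negative exponents.\<close>

context heyting_algebra
begin

lemma himp_inf_le: "inf (himp y z) y \<le> z"
  using himp_residuation[of "himp y z" y z] by simp

lemma inf_sup_distrib_heyting: "inf a (sup p q) = sup (inf a p) (inf a q)"
proof (rule order.antisym)
  have "p \<le> himp a (sup (inf a p) (inf a q))" "q \<le> himp a (sup (inf a p) (inf a q))"
    by (simp_all flip: himp_residuation add: inf_commute)
  then have "sup p q \<le> himp a (sup (inf a p) (inf a q))"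
    by simp
  then show "inf a (sup p q) \<le> sup (inf a p) (inf a q)"
    by (simp flip: himp_residuation add: inf_commute)
qed (auto intro: le_supI1 le_supI2)

lemma inf_himp_relativize: "inf a (himp p q) = inf a (himp (inf a p) (inf a q))"
proof (rule order.antisym)
  have "inf (inf a (himp p q)) (inf a p) \<le> inf (himp p q) p"
    by (auto intro: le_infI1 le_infI2)
  then have "inf (inf a (himp p q)) (inf a p) \<le> q"
    using himp_inf_le[of p q] by (rule order_trans)
  then have "inf (inf a (himp p q)) (inf a p) \<le> inf a q"
    by (simp add: le_infI1)
  then show "inf a (himp p q) \<le> inf a (himp (inf a p) (inf a q))"
    by (simp flip: himp_residuation)
next
  have "inf (inf a (himp (inf a p) (inf a q))) p \<le> inf (himp (inf a p) (inf a q)) (inf a p)"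
    by (auto intro: le_infI1 le_infI2)
  also have "\<dots> \<le> inf a q"
    by (rule himp_inf_le)
  also have "\<dots> \<le> q"
    by simp
  finally have "inf (inf a (himp (inf a p) (inf a q))) p \<le> q" .
  then show "inf a (himp (inf a p) (inf a q)) \<le> inf a (himp p q)"
    by (simp flip: himp_residuation)
qed

end

lemma inf_ipc_eval_cong:
  fixes a h1 h2 :: "'a::heyting_algebra"
  assumes "inf a h1 = inf a h2"
  shows "inf a (ipc_eval (v(x := h1)) \<phi>) = inf a (ipc_eval (v(x := h2)) \<phi>)"
proof (induction \<phi>)
  case (PAnd p q)
  have "inf a (inf P Q) = inf (inf a P) (inf a Q)" for P Q :: 'a
    by (simp add: inf_aci)
  with PAnd show ?case
    by (simp only: ipc_eval.simps)
next
  case (POr p q)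
  then show ?case
    by (simp only: ipc_eval.simps inf_sup_distrib_heyting)
next
  case (PImp p q)
  then show ?case
    by (metis inf_himp_relativize ipc_eval.simps(6))
qed (use assms in auto)

lemma polynomial_inf_le:
  fixes f :: "'a::heyting_algebra \<Rightarrow> 'a"
  assumes "mono f" "polynomial f" "inf d x \<le> y"
  shows "inf d (f x) \<le> f y"
proof -
  obtain \<phi> x0 v where f_eval: "\<And>h. f h = ipc_eval (v(x0 := h)) \<phi>"
    using assms(2) unfolding polynomial_def by blast
  have "inf d x = inf d (inf x y)"
    using assms(3) by (simp add: inf_absorb1 flip: inf_assoc)
  then have "inf d (f x) = inf d (f (inf x y))"
    unfolding f_eval by (rule inf_ipc_eval_cong)
  also have "\<dots> \<le> f y"
    using monoD[OF assms(1) inf_le2] by (auto intro: le_infI2)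
  finally show ?thesis .
qed

lemma inf_Kleene_iters_le:
  fixes f g :: "'a::bounded_lattice \<Rightarrow> 'a"
  assumes f_inf_le: "\<And>d x y. inf d x \<le> y \<Longrightarrow> inf d (f x) \<le> f y"
    and g_inf_le: "\<And>d x y. inf d x \<le> y \<Longrightarrow> inf d (g x) \<le> g y"
  shows "inf ((f ^^ i) bot) ((g ^^ j) bot) \<le> ((\<lambda>h. inf (f h) (g h)) ^^ (i + j - 1)) bot"
proof (induction i arbitrary: j)
  case (Suc i)
  note IH_i = Suc.IH
  show ?case
  proof (induction j)
    case (Suc j)
    let ?a = "((\<lambda>h. inf (f h) (g h)) ^^ (i + j)) bot"
    have "inf ((g ^^ Suc j) bot) ((f ^^ i) bot) \<le> ?a"
      using IH_i[of "Suc j"] by (simp add: inf_commute)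
    then have "inf ((g ^^ Suc j) bot) ((f ^^ Suc i) bot) \<le> f ?a"
      by (simp add: f_inf_le)
    moreover have "inf ((f ^^ Suc i) bot) ((g ^^ Suc j) bot) \<le> g ?a"
      using Suc.IH by (simp add: g_inf_le)
    ultimately show ?case
      by (simp add: inf_commute)
  qed simp
qed simp

lemma is_least_fixpoint_Kleene_iter:
  fixes f :: "'a::order_bot \<Rightarrow> 'a"
  assumes "mono f" "(f ^^ Suc k) bot \<le> (f ^^ k) bot"
  shows "is_least_fixpoint f ((f ^^ k) bot)"
  unfolding is_least_fixpoint_def
  using assms funpow_decreasing[of k "Suc k" f]
  by (auto intro: antisym Kleene_iter_lpfp)

theorem mainTheorem18:
  fixes f g :: "'a::heyting_algebra \<Rightarrow> 'a" and m n :: nat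
  assumes "mono f" and "mono g"
    and "polynomial f" and "polynomial g"
    and "is_least_fixpoint f ((f ^^ m) bot)"
    and "is_least_fixpoint g ((g ^^ n) bot)"
  shows "is_least_fixpoint (\<lambda>h. inf (f h) (g h))
           (((\<lambda>h. inf (f h) (g h)) ^^ (m + n - 1)) bot)"
proof (rule is_least_fixpoint_Kleene_iter)
  let ?k = "\<lambda>h. inf (f h) (g h)"
  show mono_k: "mono ?k"
    using assms(1,2) by (auto simp: mono_def intro: le_infI1 le_infI2)
  have "?k ((f ^^ m) bot) \<le> (f ^^ m) bot" "?k ((g ^^ n) bot) \<le> (g ^^ n) bot"
    using assms(5,6) unfolding is_least_fixpoint_def by (simp_all add: le_infI1 le_infI2)
  then have "(?k ^^ Suc (m + n - 1)) bot \<le> inf ((f ^^ m) bot) ((g ^^ n) bot)"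
    by (intro le_infI Kleene_iter_lpfp[OF mono_k])
  also have "\<dots> \<le> (?k ^^ (m + n - 1)) bot"
    by (rule inf_Kleene_iters_le) (use polynomial_inf_le assms(1-4) in blast)+
  finally show "(?k ^^ Suc (m + n - 1)) bot \<le> (?k ^^ (m + n - 1)) bot" .
qed

end
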